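(* Let $a\in\mathbb R^n$ with $a\geq 0$, $P\in\mathbb R^{n\times n}$ with $P\geq 0$, and $b:\mathbb R^n\times\mathbb R^n\to\mathbb R^n$ bilinear with $b(x,y)\geq0$ for all $x,y\geq 0$. Let $x_0\geq 0$ and $x_{k+1}=a+Px_k+b(x_k,x_k)$ for $k\geq 0$, and suppose the sequence $(x_k)$ is nondecreasing and converges to a limit $x_\ast$ with $x_\ast>x_0$ (strictly, in every component). Then $\rho\big(P+b(x_\ast,\cdot)+b(\cdot,x_\ast)\big)\leq 1$.
   Context: Inequalities between vectors/matrices are componentwise; $\rho$ denotes the spectral radius. For $x\in\mathbb R^n$, $b(x,\cdot)$ and $b(\cdot,x)$ denote the $n\times n$ matrices of the linear maps $y\mapsto b(x,y)$ and $y\mapsto b(y,x)$ respectively. The matrix $P+b(x,\cdot)+b(\cdot,x)$ is the Jacobian at $x$ of the map $x\mapsto a+Px+b(x,x)$. *)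

theory Defs
  imports "Jordan_Normal_Form.Spectral_Radius"
begin

definition bilinear_on :: "nat \<Rightarrow> (real vec \<Rightarrow> real vec \<Rightarrow> real vec) \<Rightarrow> bool" where
  "bilinear_on n b \<longleftrightarrow>
     (\<forall>x\<in>carrier_vec n. \<forall>y\<in>carrier_vec n. b x y \<in> carrier_vec n) \<and>
     (\<forall>x\<in>carrier_vec n. \<forall>x'\<in>carrier_vec n. \<forall>y\<in>carrier_vec n. \<forall>c d.
        b (c \<cdot>\<^sub>v x + d \<cdot>\<^sub>v x') y = c \<cdot>\<^sub>v b x y + d \<cdot>\<^sub>v b x' y) \<and>
     (\<forall>x\<in>carrier_vec n. \<forall>y\<in>carrier_vec n. \<forall>y'\<in>carrier_vec n. \<forall>c d.
        b x (c \<cdot>\<^sub>v y + d \<cdot>\<^sub>v y') = c \<cdot>\<^sub>v b x y + d \<cdot>\<^sub>v b x y')"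

definition bmat_left :: "nat \<Rightarrow> (real vec \<Rightarrow> real vec \<Rightarrow> real vec) \<Rightarrow> real vec \<Rightarrow> real mat" where
  "bmat_left n b x = mat n n (\<lambda>(i,j). b x (unit_vec n j) $ i)"

definition bmat_right :: "nat \<Rightarrow> (real vec \<Rightarrow> real vec \<Rightarrow> real vec) \<Rightarrow> real vec \<Rightarrow> real mat" where
  "bmat_right n b x = mat n n (\<lambda>(i,j). b (unit_vec n j) x $ i)"

definition real_spectral_radius :: "real mat \<Rightarrow> real" where
  "real_spectral_radius A = spectral_radius (map_mat complex_of_real A)"

end

theory Submission
  imports Defs
begin

(* Let x_k -> xs be the nondecreasing iteration x_{k+1} = a + P x_k + b(x_k, x_k) and let
   J = P + b(xs,.) + b(.,xs) be the Jacobian at xs.  The proof studies the error vectors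
   d_k = xs - x_k, which are nonnegative, nonincreasing, tend to 0 and satisfy d_0 > 0.
   Subtracting the iteration from the fixed point equation xs = a + P xs + b(xs,xs) gives
     J d_k = d_{k+1} + b(d_k, d_k),
   and the quadratic term is small: b(d_k,d_k) <= d_{k+1} always (so J d_k <= 2 d_{k+1}), and
   b(d_k,d_k) <= e * J d_k as soon as d_k <= e xs (so J d_k <= d_{k+1} / (1 - e) eventually).
   Iterating such comparisons bounds the entries of J^m by W(i,j) * c^m for every c > 1, and an
   eigenvector argument then gives rho(J) <= c; letting c -> 1 proves rho(J) <= 1.
   The file is organised accordingly: (1) coordinates of linear and bilinear maps and the matrices
   bmat_left/bmat_right; (2) nonnegative matrices and iterated comparisons; (3) spectral radius bounds
   from growth of powers and from comparison sequences; (4) a locale for the iteration, in which the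
   error identities above are derived; finally the theorem is an interpretation of that locale. *)

lemma mult_mat_vec_coordinates:
  "M \<in> carrier_mat n n \<Longrightarrow> v \<in> carrier_vec n \<Longrightarrow> i < n \<Longrightarrow>
   (M *\<^sub>v v) $ i = (\<Sum>j<n. M $$ (i,j) * v $ j)"
  by (auto simp: scalar_prod_def atLeast0LessThan intro!: sum.cong)

definition linear_map_on :: "nat \<Rightarrow> (real vec \<Rightarrow> real vec) \<Rightarrow> bool" where
  "linear_map_on n f \<longleftrightarrow>
     (\<forall>y\<in>carrier_vec n. f y \<in> carrier_vec n) \<and>
     (\<forall>y\<in>carrier_vec n. \<forall>y'\<in>carrier_vec n. \<forall>c d.
        f (c \<cdot>\<^sub>v y + d \<cdot>\<^sub>v y') = c \<cdot>\<^sub>v f y + d \<cdot>\<^sub>v f y')"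

lemma bilinear_on_linear_maps:
  assumes "bilinear_on n b" "u \<in> carrier_vec n"
  shows "linear_map_on n (b u)" and "linear_map_on n (\<lambda>v. b v u)"
  using assms unfolding bilinear_on_def linear_map_on_def by blast+

lemma linear_map_onD:
  assumes "linear_map_on n f"
  shows "\<And>y. y \<in> carrier_vec n \<Longrightarrow> f y \<in> carrier_vec n"
    and "\<And>y y' c d. y \<in> carrier_vec n \<Longrightarrow> y' \<in> carrier_vec n \<Longrightarrow>
           f (c \<cdot>\<^sub>v y + d \<cdot>\<^sub>v y') = c \<cdot>\<^sub>v f y + d \<cdot>\<^sub>v f y'"
  using assms unfolding linear_map_on_def by blast+

lemma linear_map_zero:
  assumes f: "linear_map_on n f" and i: "i < n"
  shows "f (0\<^sub>v n) $ i = 0"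
proof -
  have "(0::real) \<cdot>\<^sub>v 0\<^sub>v n + 0 \<cdot>\<^sub>v 0\<^sub>v n = 0\<^sub>v n" by auto
  then have "f (0\<^sub>v n) = 0 \<cdot>\<^sub>v f (0\<^sub>v n) + 0 \<cdot>\<^sub>v f (0\<^sub>v n)"
    using linear_map_onD(2)[OF f, of "0\<^sub>v n" "0\<^sub>v n" 0 0] by simp
  moreover have "f (0\<^sub>v n) \<in> carrier_vec n" using linear_map_onD(1)[OF f] by simp
  ultimately show ?thesis using i
    by (metis carrier_vecD index_add_vec(1) index_smult_vec(1,2) mult_zero_left add_0)
qed

lemma linear_map_coordinates:
  assumes f: "linear_map_on n f" and y: "y \<in> carrier_vec n" and i: "i < n"
  shows "f y $ i = (\<Sum>j<n. y $ j * f (unit_vec n j) $ i)"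
proof -
  define trunc where "trunc m = vec n (\<lambda>j. if j < m then y $ j else 0)" for m
  have "f (trunc m) $ i = (\<Sum>j<m. y $ j * f (unit_vec n j) $ i)" if "m \<le> n" for m
    using that
  proof (induction m)
    case 0
    have "trunc 0 = 0\<^sub>v n" unfolding trunc_def by auto
    then show ?case using linear_map_zero[OF f i] by simp
  next
    case (Suc m)
    have "trunc (Suc m) = 1 \<cdot>\<^sub>v trunc m + (y $ m) \<cdot>\<^sub>v unit_vec n m"
      using Suc.prems by (intro eq_vecI) (auto simp: trunc_def unit_vec_def less_Suc_eq)
    then have "f (trunc (Suc m)) = 1 \<cdot>\<^sub>v f (trunc m) + (y $ m) \<cdot>\<^sub>v f (unit_vec n m)"
      using linear_map_onD(2)[OF f, of "trunc m" "unit_vec n m" 1 "y $ m"] by (simp add: trunc_def)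
    moreover have "f (trunc m) \<in> carrier_vec n" "f (unit_vec n m) \<in> carrier_vec n"
      using linear_map_onD(1)[OF f] by (auto simp: trunc_def)
    ultimately show ?case using Suc i by simp
  qed
  moreover have "trunc n = y" using y unfolding trunc_def by auto
  ultimately show ?thesis by auto
qed

lemma linear_map_diff:
  assumes f: "linear_map_on n f" and u: "u \<in> carrier_vec n" and w: "w \<in> carrier_vec n" and i: "i < n"
  shows "f (u - w) $ i = f u $ i - f w $ i"
proof -
  have "f (u - w) $ i = (\<Sum>j<n. (u $ j - w $ j) * f (unit_vec n j) $ i)"
    using linear_map_coordinates[OF f _ i, of "u - w"] u w by simp
  also have "\<dots> = f u $ i - f w $ i"
    using linear_map_coordinates[OF f u i] linear_map_coordinates[OF f w i]
    by (simp add: left_diff_distrib sum_subtractf)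
  finally show ?thesis .
qed

lemma linear_map_smult:
  assumes f: "linear_map_on n f" and u: "u \<in> carrier_vec n" and i: "i < n"
  shows "f (c \<cdot>\<^sub>v u) $ i = c * f u $ i"
proof -
  have "f (c \<cdot>\<^sub>v u) $ i = (\<Sum>j<n. (c * u $ j) * f (unit_vec n j) $ i)"
    using linear_map_coordinates[OF f _ i, of "c \<cdot>\<^sub>v u"] u by simp
  also have "\<dots> = c * f u $ i"
    using linear_map_coordinates[OF f u i] by (simp add: sum_distrib_left mult.assoc)
  finally show ?thesis .
qed

(* A bilinear map is given by its coefficient tensor b(e_j, e_l); this is what makes
   b(x_k, x_k) depend continuously on x_k. *)
lemma bilinear_coordinates:
  assumes b: "bilinear_on n b" and u: "u \<in> carrier_vec n" and v: "v \<in> carrier_vec n" and i: "i < n"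
  shows "b u v $ i = (\<Sum>j<n. \<Sum>l<n. u $ j * v $ l * b (unit_vec n j) (unit_vec n l) $ i)"
proof -
  have "b u v $ i = (\<Sum>j<n. u $ j * b (unit_vec n j) v $ i)"
    using linear_map_coordinates[OF bilinear_on_linear_maps(2)[OF b v] u i] .
  also have "\<dots> = (\<Sum>j<n. u $ j * (\<Sum>l<n. v $ l * b (unit_vec n j) (unit_vec n l) $ i))"
    using linear_map_coordinates[OF bilinear_on_linear_maps(1)[OF b] v i] by simp
  finally show ?thesis by (simp add: sum_distrib_left mult.assoc)
qed

lemma linear_map_matrix:
  assumes f: "linear_map_on n f" and v: "v \<in> carrier_vec n"
  shows "mat n n (\<lambda>(i,j). f (unit_vec n j) $ i) *\<^sub>v v = f v"
proof (rule eq_vecI)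
  show "dim_vec (mat n n (\<lambda>(i,j). f (unit_vec n j) $ i) *\<^sub>v v) = dim_vec (f v)"
    using linear_map_onD(1)[OF f v] by simp
  fix i assume "i < dim_vec (f v)"
  then have i: "i < n" using linear_map_onD(1)[OF f v] by simp
  let ?M = "mat n n (\<lambda>(i,j). f (unit_vec n j) $ i)"
  have "(?M *\<^sub>v v) $ i = (\<Sum>j<n. ?M $$ (i,j) * v $ j)"
    using i v by (intro mult_mat_vec_coordinates) auto
  also have "\<dots> = (\<Sum>j<n. f (unit_vec n j) $ i * v $ j)"
    using i by (intro sum.cong) auto
  also have "\<dots> = f v $ i"
    unfolding linear_map_coordinates[OF f v i] by (simp add: ac_simps)
  finally show "(?M *\<^sub>v v) $ i = f v $ i" .
qed

lemma bmat_left_mult_vec: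
  assumes "bilinear_on n b" "u \<in> carrier_vec n" "v \<in> carrier_vec n"
  shows "bmat_left n b u *\<^sub>v v = b u v"
  unfolding bmat_left_def using linear_map_matrix[OF bilinear_on_linear_maps(1)[OF assms(1,2)] assms(3)] .

lemma bmat_right_mult_vec:
  assumes "bilinear_on n b" "u \<in> carrier_vec n" "v \<in> carrier_vec n"
  shows "bmat_right n b u *\<^sub>v v = b v u"
  unfolding bmat_right_def using linear_map_matrix[OF bilinear_on_linear_maps(2)[OF assms(1,2)] assms(3)] .

definition nonneg_mat :: "nat \<Rightarrow> real mat \<Rightarrow> bool" where
  "nonneg_mat n M \<longleftrightarrow> (\<forall>i<n. \<forall>j<n. 0 \<le> M $$ (i,j))"

definition nonneg_vec :: "nat \<Rightarrow> real vec \<Rightarrow> bool" where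
  "nonneg_vec n v \<longleftrightarrow> (\<forall>i<n. 0 \<le> v $ i)"

lemma mult_mat_vec_nonneg:
  assumes "M \<in> carrier_mat n n" "nonneg_mat n M" "v \<in> carrier_vec n" "nonneg_vec n v" "i < n"
  shows "0 \<le> (M *\<^sub>v v) $ i"
  using assms unfolding mult_mat_vec_coordinates[OF assms(1,3,5)] nonneg_mat_def nonneg_vec_def
  by (intro sum_nonneg mult_nonneg_nonneg) auto

lemma mult_mat_vec_mono:
  assumes M: "M \<in> carrier_mat n n" "nonneg_mat n M"
    and u: "u \<in> carrier_vec n" and v: "v \<in> carrier_vec n"
    and le: "\<forall>j<n. u $ j \<le> v $ j" and i: "i < n"
  shows "(M *\<^sub>v u) $ i \<le> (M *\<^sub>v v) $ i"
  unfolding mult_mat_vec_coordinates[OF M(1) u i] mult_mat_vec_coordinates[OF M(1) v i]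
  using M(2) le i unfolding nonneg_mat_def by (intro sum_mono mult_left_mono) auto

lemma pow_mat_nonneg:
  assumes M: "M \<in> carrier_mat n n" "nonneg_mat n M"
  shows "nonneg_mat n (M ^\<^sub>m m)"
proof (induction m)
  case 0
  show ?case unfolding nonneg_mat_def using M(1) by auto
next
  case (Suc m)
  have Mm: "M ^\<^sub>m m \<in> carrier_mat n n" using M(1) by simp
  show ?case unfolding nonneg_mat_def
  proof (intro allI impI)
    fix i j assume i: "i < n" and j: "j < n"
    have "(M ^\<^sub>m Suc m) $$ (i,j) = (\<Sum>l\<in>{0..<n}. (M ^\<^sub>m m) $$ (i,l) * M $$ (l,j))"
      using i j Mm M(1) by (auto simp: scalar_prod_def)
    also have "\<dots> \<ge> 0"
      using Suc M(2) i j unfolding nonneg_mat_def by (intro sum_nonneg mult_nonneg_nonneg) auto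
    finally show "(M ^\<^sub>m Suc m) $$ (i,j) \<ge> 0" .
  qed
qed

lemma pow_mat_Suc_mult_vec:
  assumes "M \<in> carrier_mat n n" "v \<in> carrier_vec n"
  shows "M ^\<^sub>m Suc m *\<^sub>v v = M ^\<^sub>m m *\<^sub>v (M *\<^sub>v v)"
  using assoc_mult_mat_vec[OF pow_carrier_mat[OF assms(1)] assms] by simp

lemma pow_mat_mult_vec_add:
  assumes M: "M \<in> carrier_mat n n" and v: "v \<in> carrier_vec n"
  shows "M ^\<^sub>m (l + k) *\<^sub>v v = M ^\<^sub>m l *\<^sub>v (M ^\<^sub>m k *\<^sub>v v)"
  using v
proof (induction k arbitrary: v)
  case 0
  then show ?case using M by simp
next
  case (Suc k)
  have "M ^\<^sub>m (l + Suc k) *\<^sub>v v = M ^\<^sub>m (l + k) *\<^sub>v (M *\<^sub>v v)"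
    using pow_mat_Suc_mult_vec[OF M Suc.prems] by simp
  also have "\<dots> = M ^\<^sub>m l *\<^sub>v (M ^\<^sub>m k *\<^sub>v (M *\<^sub>v v))"
    using Suc.IH M Suc.prems by simp
  also have "\<dots> = M ^\<^sub>m l *\<^sub>v (M ^\<^sub>m Suc k *\<^sub>v v)"
    using pow_mat_Suc_mult_vec[OF M Suc.prems] by simp
  finally show ?case .
qed

lemma iterate_comparison:
  assumes M: "M \<in> carrier_mat n n" "nonneg_mat n M" and \<gamma>: "\<gamma> \<ge> 0"
    and d: "\<And>k. d k \<in> carrier_vec n"
    and step: "\<And>k i. k \<ge> k\<^sub>0 \<Longrightarrow> i < n \<Longrightarrow> (M *\<^sub>v d k) $ i \<le> \<gamma> * d (Suc k) $ i"
    and i: "i < n"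
  shows "(M ^\<^sub>m m *\<^sub>v d k\<^sub>0) $ i \<le> \<gamma> ^ m * d (k\<^sub>0 + m) $ i"
  using step i
proof (induction m arbitrary: k\<^sub>0 i)
  case 0
  then show ?case using M d by simp
next
  case (Suc m)
  have Mm: "M ^\<^sub>m m \<in> carrier_mat n n" "nonneg_mat n (M ^\<^sub>m m)"
    using M pow_mat_nonneg by auto
  have "M ^\<^sub>m Suc m *\<^sub>v d k\<^sub>0 = M ^\<^sub>m m *\<^sub>v (M *\<^sub>v d k\<^sub>0)"
    using pow_mat_Suc_mult_vec[OF M(1) d] .
  also have "\<dots> $ i \<le> (M ^\<^sub>m m *\<^sub>v (\<gamma> \<cdot>\<^sub>v d (Suc k\<^sub>0))) $ i"
    using Suc.prems M d by (intro mult_mat_vec_mono[OF Mm]) (auto simp: carrier_vecD[OF d])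
  also have "\<dots> = \<gamma> * (M ^\<^sub>m m *\<^sub>v d (Suc k\<^sub>0)) $ i"
    using mult_mat_vec[OF Mm(1) d] Suc.prems M by simp
  also have "\<dots> \<le> \<gamma> * (\<gamma> ^ m * d (Suc k\<^sub>0 + m) $ i)"
    using Suc.IH[of "Suc k\<^sub>0" i] Suc.prems \<gamma> by (intro mult_left_mono) auto
  finally show ?case by simp
qed

(* If the entries of J^m grow at most like c^m (for m >= K), every eigenvalue mu of J has
   |mu| <= c: otherwise |mu|^m |v_i| <= c^m R for an eigenvector v would fail for large m. *)
lemma spectral_radius_le_of_power_growth:
  assumes J: "J \<in> carrier_mat n n" and n: "0 < n" and c: "0 < c"
    and growth: "\<And>m i j. K \<le> m \<Longrightarrow> i < n \<Longrightarrow> j < n \<Longrightarrow> \<bar>(J ^\<^sub>m m) $$ (i,j)\<bar> \<le> W i j * c ^ m"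
  shows "real_spectral_radius J \<le> c"
proof -
  define Jc where "Jc = map_mat complex_of_real J"
  have Jc: "Jc \<in> carrier_mat n n" using J unfolding Jc_def by auto
  from spectral_radius_mem_max(1)[OF Jc n] obtain \<mu> where "\<mu> \<in> spectrum Jc"
    and radius: "spectral_radius Jc = norm \<mu>" by auto
  then obtain v where ev: "eigenvector Jc v \<mu>" unfolding spectrum_def eigenvalue_def by auto
  have v: "v \<in> carrier_vec n" "v \<noteq> 0\<^sub>v n" using ev Jc unfolding eigenvector_def by auto
  obtain i where i: "i < n" "v $ i \<noteq> 0"
    using v by (metis eq_vecI index_zero_vec carrier_vecD)
  define R where "R = (\<Sum>j<n. W i j * norm (v $ j))"
  have orbit: "norm \<mu> ^ m * norm (v $ i) \<le> c ^ m * R" if m: "K \<le> m" for m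
  proof -
    let ?Jm = "map_mat complex_of_real (J ^\<^sub>m m)"
    have "?Jm = Jc ^\<^sub>m m"
      unfolding Jc_def by (rule of_real_hom.mat_hom_pow[OF J])
    then have "?Jm *\<^sub>v v = \<mu> ^ m \<cdot>\<^sub>v v" using eigenvector_pow[OF Jc ev] by simp
    then have "\<mu> ^ m * v $ i = (?Jm *\<^sub>v v) $ i" using v(1) i(1) by simp
    also have "\<dots> = (\<Sum>j<n. ?Jm $$ (i,j) * v $ j)"
      using J v(1) i(1) by (intro mult_mat_vec_coordinates) auto
    also have "\<dots> = (\<Sum>j<n. complex_of_real ((J ^\<^sub>m m) $$ (i,j)) * v $ j)"
      using J i(1) by (intro sum.cong refl) auto
    finally have eq: "\<mu> ^ m * v $ i = (\<Sum>j<n. complex_of_real ((J ^\<^sub>m m) $$ (i,j)) * v $ j)" .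
    have "norm \<mu> ^ m * norm (v $ i) = norm (\<mu> ^ m * v $ i)" by (simp add: norm_mult norm_power)
    also have "\<dots> \<le> (\<Sum>j<n. \<bar>(J ^\<^sub>m m) $$ (i,j)\<bar> * norm (v $ j))"
      unfolding eq by (rule order_trans[OF norm_sum]) (simp add: norm_mult)
    also have "\<dots> \<le> (\<Sum>j<n. (W i j * c ^ m) * norm (v $ j))"
      using growth[OF m i(1)] by (intro sum_mono mult_right_mono) auto
    also have "\<dots> = c ^ m * R" unfolding R_def by (simp add: sum_distrib_left ac_simps)
    finally show ?thesis .
  qed
  have "norm \<mu> \<le> c"
  proof (rule ccontr)
    assume "\<not> norm \<mu> \<le> c"
    then have q: "norm \<mu> / c > 1" using c by simp
    obtain m where m: "R / norm (v $ i) < (norm \<mu> / c) ^ m" using real_arch_pow[OF q] by blast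
    have "(norm \<mu> / c) ^ (m + K) * norm (v $ i) \<le> R"
      using orbit[of "m + K"] c by (simp add: field_simps)
    then have "(norm \<mu> / c) ^ (m + K) \<le> R / norm (v $ i)"
      using i by (simp add: field_simps)
    moreover have "(norm \<mu> / c) ^ m \<le> (norm \<mu> / c) ^ (m + K)"
      using q by (intro power_increasing) auto
    ultimately show False using m by linarith
  qed
  then show ?thesis unfolding real_spectral_radius_def Jc_def[symmetric] radius .
qed

(* Along a comparison sequence (J d_k <= C d_{k+1} for all k, J d_k <= c d_{k+1} for k >= K,
   d nonincreasing) the orbit of d_0 grows at most like C^K c^l:
   J^(l+K) d_0 = J^l (J^K d_0) <= C^K J^l d_K <= C^K c^l d_{K+l} <= C^K c^l d_0. *)
lemma comparison_sequence_orbit: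
  assumes J: "J \<in> carrier_mat n n" "nonneg_mat n J" and c: "0 < c" and C: "0 \<le> C"
    and d: "\<And>k. d k \<in> carrier_vec n"
    and d_decreasing: "\<And>k i. i < n \<Longrightarrow> d (Suc k) $ i \<le> d k $ i"
    and step: "\<And>k i. i < n \<Longrightarrow> (J *\<^sub>v d k) $ i \<le> C * d (Suc k) $ i"
    and late_step: "\<And>k i. K \<le> k \<Longrightarrow> i < n \<Longrightarrow> (J *\<^sub>v d k) $ i \<le> c * d (Suc k) $ i"
    and i: "i < n"
  shows "(J ^\<^sub>m (l + K) *\<^sub>v d 0) $ i \<le> C ^ K * c ^ l * d 0 $ i"
proof -
  have Jl: "J ^\<^sub>m l \<in> carrier_mat n n" "nonneg_mat n (J ^\<^sub>m l)"
    using J pow_mat_nonneg by auto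
  have d_le_d0: "d k $ i \<le> d 0 $ i" for k
    by (induction k) (auto intro: order_trans d_decreasing[OF i])
  have head: "(J ^\<^sub>m K *\<^sub>v d 0) $ j \<le> (C ^ K \<cdot>\<^sub>v d K) $ j" if "j < n" for j
  proof -
    have "(J ^\<^sub>m K *\<^sub>v d 0) $ j \<le> C ^ K * d (0 + K) $ j"
      by (rule iterate_comparison[OF J C d]) (use step that in auto)
    then show ?thesis using that by (simp add: carrier_vecD[OF d])
  qed
  have tail: "(J ^\<^sub>m l *\<^sub>v d K) $ i \<le> c ^ l * d (K + l) $ i"
    by (rule iterate_comparison[OF J _ d]) (use c late_step i in auto)
  have "(J ^\<^sub>m (l + K) *\<^sub>v d 0) $ i = (J ^\<^sub>m l *\<^sub>v (J ^\<^sub>m K *\<^sub>v d 0)) $ i"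
    using pow_mat_mult_vec_add[OF J(1) d] by simp
  also have "\<dots> \<le> (J ^\<^sub>m l *\<^sub>v (C ^ K \<cdot>\<^sub>v d K)) $ i"
    using J d head i by (intro mult_mat_vec_mono[OF Jl] mult_mat_vec_carrier[of _ n n]) auto
  also have "\<dots> = C ^ K * (J ^\<^sub>m l *\<^sub>v d K) $ i"
    using mult_mat_vec[OF Jl(1) d] i J(1) by simp
  also have "\<dots> \<le> C ^ K * (c ^ l * d (K + l) $ i)"
    using tail C by (intro mult_left_mono) auto
  also have "\<dots> \<le> C ^ K * (c ^ l * d 0 $ i)"
    using d_le_d0 c C by (intro mult_left_mono) auto
  finally show ?thesis by simp
qed

(* Comparison sequences bound the spectral radius: if moreover d_k >= 0 and d_0 > 0, then
   J^m_ij d0_j <= (J^m d_0)_i <= C^K c^(m-K) d0_i, so rho(J) <= c. *)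
lemma spectral_radius_le_of_comparison_sequence:
  assumes J: "J \<in> carrier_mat n n" "nonneg_mat n J" and n: "0 < n" and c: "0 < c" and C: "0 \<le> C"
    and d: "\<And>k. d k \<in> carrier_vec n"
    and d_nonneg: "\<And>k i. i < n \<Longrightarrow> 0 \<le> d k $ i"
    and d_decreasing: "\<And>k i. i < n \<Longrightarrow> d (Suc k) $ i \<le> d k $ i"
    and d0_pos: "\<And>i. i < n \<Longrightarrow> 0 < d 0 $ i"
    and step: "\<And>k i. i < n \<Longrightarrow> (J *\<^sub>v d k) $ i \<le> C * d (Suc k) $ i"
    and late_step: "\<And>k i. K \<le> k \<Longrightarrow> i < n \<Longrightarrow> (J *\<^sub>v d k) $ i \<le> c * d (Suc k) $ i"
  shows "real_spectral_radius J \<le> c"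
proof (rule spectral_radius_le_of_power_growth[OF J(1) n c,
      where W = "\<lambda>i j. C ^ K * d 0 $ i / (c ^ K * d 0 $ j)"])
  fix m i j assume m: "K \<le> m" and i: "i < n" and j: "j < n"
  obtain l where l: "m = l + K" using m by (metis add.commute le_add_diff_inverse)
  have entry_nonneg: "0 \<le> (J ^\<^sub>m m) $$ (i,j')" if "j' < n" for j'
    using pow_mat_nonneg[OF J] i that unfolding nonneg_mat_def by blast
  have "(J ^\<^sub>m m) $$ (i,j) * d 0 $ j \<le> (\<Sum>j'<n. (J ^\<^sub>m m) $$ (i,j') * d 0 $ j')"
    using entry_nonneg d_nonneg j by (intro member_le_sum) auto
  also have "\<dots> = (J ^\<^sub>m m *\<^sub>v d 0) $ i"
    using J d i by (intro mult_mat_vec_coordinates[symmetric]) auto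
  also have "\<dots> \<le> C ^ K * c ^ l * d 0 $ i"
    unfolding l
    by (rule comparison_sequence_orbit[OF J c C d]) (use d_decreasing step late_step i in auto)
  finally show "\<bar>(J ^\<^sub>m m) $$ (i,j)\<bar> \<le> C ^ K * d 0 $ i / (c ^ K * d 0 $ j) * c ^ m"
    using entry_nonneg[OF j] d0_pos[OF j] c unfolding l by (simp add: field_simps power_add)
qed

locale nonneg_quadratic_iteration =
  fixes n :: nat and a :: "real vec" and P :: "real mat"
    and b :: "real vec \<Rightarrow> real vec \<Rightarrow> real vec"
    and x :: "nat \<Rightarrow> real vec" and xs :: "real vec"
  assumes n: "0 < n"
    and a: "a \<in> carrier_vec n"
    and P: "P \<in> carrier_mat n n" "nonneg_mat n P"
    and b: "bilinear_on n b"
    and b_nonneg: "\<And>u v. u \<in> carrier_vec n \<Longrightarrow> v \<in> carrier_vec n \<Longrightarrow>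
                    nonneg_vec n u \<Longrightarrow> nonneg_vec n v \<Longrightarrow> nonneg_vec n (b u v)"
    and x0: "x 0 \<in> carrier_vec n" "nonneg_vec n (x 0)"
    and iteration: "\<And>k. x (Suc k) = a + P *\<^sub>v x k + b (x k) (x k)"
    and monotone: "\<And>k i. i < n \<Longrightarrow> x k $ i \<le> x (Suc k) $ i"
    and xs: "xs \<in> carrier_vec n"
    and convergent: "\<And>i. i < n \<Longrightarrow> (\<lambda>k. x k $ i) \<longlonglongrightarrow> xs $ i"
    and strict: "\<And>i. i < n \<Longrightarrow> x 0 $ i < xs $ i"
begin

lemma x_carrier: "x k \<in> carrier_vec n"
proof (induction k)
  case 0
  show ?case using x0(1) .
next
  case (Suc k)
  then show ?case using iteration a P(1) bilinear_on_linear_maps(1)[OF b Suc] linear_map_onD(1) by simp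
qed

lemma b_closed: "u \<in> carrier_vec n \<Longrightarrow> v \<in> carrier_vec n \<Longrightarrow> b u v \<in> carrier_vec n"
  using bilinear_on_linear_maps(1)[OF b] linear_map_onD(1) by blast

lemma x_between: "i < n \<Longrightarrow> x 0 $ i \<le> x k $ i \<and> x k $ i \<le> xs $ i"
proof -
  assume i: "i < n"
  have "incseq (\<lambda>k. x k $ i)" using monotone[OF i] by (rule incseq_SucI)
  then show ?thesis using incseq_le[OF _ convergent[OF i]] by (auto simp: incseq_def)
qed

lemma x_nonneg: "nonneg_vec n (x k)"
  using x0(2) x_between unfolding nonneg_vec_def by (meson order_trans)

lemma xs_pos: "i < n \<Longrightarrow> 0 < xs $ i"
  using x0(2) strict unfolding nonneg_vec_def by (meson order_le_less_trans)

lemma fixed_point: "i < n \<Longrightarrow> xs $ i = a $ i + (P *\<^sub>v xs) $ i + b xs xs $ i"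
proof -
  assume i: "i < n"
  let ?e = "unit_vec n"
  define F where "F v = a $ i + (\<Sum>j<n. P $$ (i,j) * v $ j)
                         + (\<Sum>j<n. \<Sum>l<n. v $ j * v $ l * b (?e j) (?e l) $ i)" for v
  have F: "F v = a $ i + (P *\<^sub>v v) $ i + b v v $ i" if "v \<in> carrier_vec n" for v
    unfolding F_def mult_mat_vec_coordinates[OF P(1) that i] bilinear_coordinates[OF b that that i] ..
  have "x (Suc k) $ i = F (x k)" for k
    unfolding F[OF x_carrier] iteration using i P(1)
    by (simp add: carrier_vecD[OF a] carrier_vecD[OF b_closed[OF x_carrier x_carrier]])
  then have "(\<lambda>k. F (x k)) \<longlonglongrightarrow> xs $ i"
    using LIMSEQ_Suc[OF convergent[OF i]] by simp
  moreover have "(\<lambda>k. F (x k)) \<longlonglongrightarrow> F xs"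
    unfolding F_def using convergent by (intro tendsto_intros) auto
  ultimately show ?thesis using LIMSEQ_unique F[OF xs] by metis
qed

definition err :: "nat \<Rightarrow> real vec" where
  "err k = xs - x k"

lemma err_carrier: "err k \<in> carrier_vec n"
  unfolding err_def using xs x_carrier[of k] by simp

lemma err_index: "i < n \<Longrightarrow> err k $ i = xs $ i - x k $ i"
  unfolding err_def by (simp add: carrier_vecD[OF xs] carrier_vecD[OF x_carrier])

lemma err_nonneg: "nonneg_vec n (err k)"
  using x_between err_index unfolding nonneg_vec_def by simp

lemma err_decreasing: "i < n \<Longrightarrow> err (Suc k) $ i \<le> err k $ i"
  using monotone err_index by simp

lemma err0_pos: "i < n \<Longrightarrow> 0 < err 0 $ i"
  using strict err_index by simp

lemma err_tendsto_zero: "i < n \<Longrightarrow> (\<lambda>k. err k $ i) \<longlonglongrightarrow> 0"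
  using tendsto_diff[OF tendsto_const convergent, of i "xs $ i"] err_index by simp

(* Error recursion: d_{k+1} = P d_k + b(xs, d_k) + b(d_k, x_k), by bilinearity from
   b(xs,xs) - b(x_k,x_k) = b(xs, xs - x_k) + b(xs - x_k, x_k). *)
lemma err_recursion:
  assumes i: "i < n"
  shows "err (Suc k) $ i = (P *\<^sub>v err k) $ i + b xs (err k) $ i + b (err k) (x k) $ i"
proof -
  have "err (Suc k) $ i = ((P *\<^sub>v xs) $ i - (P *\<^sub>v x k) $ i) + (b xs xs $ i - b (x k) (x k) $ i)"
    using fixed_point[OF i] err_index[OF i] i P(1) 
    by (simp add: iteration carrier_vecD[OF a] carrier_vecD[OF b_closed[OF x_carrier x_carrier]])
  also have "(P *\<^sub>v xs) $ i - (P *\<^sub>v x k) $ i = (P *\<^sub>v err k) $ i"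
    unfolding err_def using mult_minus_distrib_mat_vec[OF P(1) xs x_carrier] i P(1) by simp
  also have "b xs xs $ i - b (x k) (x k) $ i = b xs (err k) $ i + b (err k) (x k) $ i"
    unfolding err_def
    using linear_map_diff[OF bilinear_on_linear_maps(1)[OF b xs] xs x_carrier i]
      linear_map_diff[OF bilinear_on_linear_maps(2)[OF b x_carrier] xs x_carrier i]
    by simp
  finally show ?thesis by simp
qed

lemma b_nonneg_index:
  "u \<in> carrier_vec n \<Longrightarrow> v \<in> carrier_vec n \<Longrightarrow> nonneg_vec n u \<Longrightarrow> nonneg_vec n v \<Longrightarrow> i < n
   \<Longrightarrow> 0 \<le> b u v $ i"
  using b_nonneg unfolding nonneg_vec_def by blast

definition jacobian :: "real mat" where
  "jacobian = P + bmat_left n b xs + bmat_right n b xs"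

lemma jacobian_carrier: "jacobian \<in> carrier_mat n n"
  unfolding jacobian_def bmat_left_def bmat_right_def using P(1) by auto

lemma jacobian_nonneg: "nonneg_mat n jacobian"
  unfolding nonneg_mat_def
proof (intro allI impI)
  fix i j assume i: "i < n" and j: "j < n"
  have e: "unit_vec n j \<in> carrier_vec n" "nonneg_vec n (unit_vec n j)"
    unfolding nonneg_vec_def by (auto simp: unit_vec_def)
  have xs_nonneg: "nonneg_vec n xs" using xs_pos unfolding nonneg_vec_def by (simp add: less_imp_le)
  have "jacobian $$ (i,j) = P $$ (i,j) + b xs (unit_vec n j) $ i + b (unit_vec n j) xs $ i"
    unfolding jacobian_def bmat_left_def bmat_right_def using P(1) i j by simp
  also have "\<dots> \<ge> 0"
    using P(2) i j b_nonneg_index[OF xs e(1) xs_nonneg e(2) i] b_nonneg_index[OF e(1) xs e(2) xs_nonneg i]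
    unfolding nonneg_mat_def by simp
  finally show "0 \<le> jacobian $$ (i,j)" .
qed

lemma jacobian_mult_vec:
  assumes v: "v \<in> carrier_vec n" and i: "i < n"
  shows "(jacobian *\<^sub>v v) $ i = (P *\<^sub>v v) $ i + b xs v $ i + b v xs $ i"
proof -
  have L: "bmat_left n b xs \<in> carrier_mat n n" and R: "bmat_right n b xs \<in> carrier_mat n n"
    unfolding bmat_left_def bmat_right_def by auto
  have "jacobian *\<^sub>v v = (P + bmat_left n b xs) *\<^sub>v v + bmat_right n b xs *\<^sub>v v"
    unfolding jacobian_def using P(1) L R v by (intro add_mult_distrib_mat_vec) auto
  also have "(P + bmat_left n b xs) *\<^sub>v v = P *\<^sub>v v + bmat_left n b xs *\<^sub>v v"
    using P(1) L v by (rule add_mult_distrib_mat_vec)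
  finally have "jacobian *\<^sub>v v = P *\<^sub>v v + bmat_left n b xs *\<^sub>v v + bmat_right n b xs *\<^sub>v v" .
  then show ?thesis
    unfolding bmat_left_mult_vec[OF b xs v] bmat_right_mult_vec[OF b xs v]
    using i P(1) by (simp add: carrier_vecD[OF b_closed[OF xs v]] carrier_vecD[OF b_closed[OF v xs]])
qed

lemma jacobian_err:
  assumes i: "i < n"
  shows "(jacobian *\<^sub>v err k) $ i = err (Suc k) $ i + b (err k) (err k) $ i"
proof -
  have "xs - x k = err k" unfolding err_def ..
  then have "b (err k) xs $ i - b (err k) (x k) $ i = b (err k) (err k) $ i"
    using linear_map_diff[OF bilinear_on_linear_maps(1)[OF b err_carrier[of k]] xs x_carrier[of k] i]
    by simp
  then show ?thesis
    unfolding jacobian_mult_vec[OF err_carrier i] err_recursion[OF i] by simp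
qed

(* b(d_k,d_k) <= b(xs,d_k) <= d_{k+1}, since xs - d_k = x_k >= 0. *)
lemma quadratic_le_next_err:
  assumes i: "i < n"
  shows "b (err k) (err k) $ i \<le> err (Suc k) $ i"
proof -
  have "xs - err k = x k"
    unfolding err_def using xs x_carrier[of k] by (intro eq_vecI) auto
  then have "b xs (err k) $ i - b (err k) (err k) $ i = b (x k) (err k) $ i"
    using linear_map_diff[OF bilinear_on_linear_maps(2)[OF b err_carrier[of k]] xs err_carrier[of k] i]
    by simp
  also have "\<dots> \<ge> 0" by (rule b_nonneg_index[OF x_carrier err_carrier x_nonneg err_nonneg i])
  finally have "b (err k) (err k) $ i \<le> b xs (err k) $ i" by simp
  moreover have "0 \<le> (P *\<^sub>v err k) $ i"
    by (rule mult_mat_vec_nonneg[OF P err_carrier err_nonneg i])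
  moreover have "0 \<le> b (err k) (x k) $ i"
    by (rule b_nonneg_index[OF err_carrier x_carrier err_nonneg x_nonneg i])
  ultimately show ?thesis unfolding err_recursion[OF i] by linarith
qed

(* If d_k <= e xs, then b(d_k,d_k) <= e b(d_k,xs) <= e (J d_k). *)
lemma quadratic_le_jacobian_err:
  assumes i: "i < n" and e: "0 \<le> e" and small: "\<And>l. l < n \<Longrightarrow> err k $ l \<le> e * xs $ l"
  shows "b (err k) (err k) $ i \<le> e * (jacobian *\<^sub>v err k) $ i"
proof -
  let ?bk = "b (err k)"
  have lin: "linear_map_on n ?bk" by (rule bilinear_on_linear_maps(1)[OF b err_carrier])
  have gap: "e \<cdot>\<^sub>v xs - err k \<in> carrier_vec n" "nonneg_vec n (e \<cdot>\<^sub>v xs - err k)"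
    using small xs err_carrier[of k] unfolding nonneg_vec_def by auto
  have "?bk (e \<cdot>\<^sub>v xs) $ i - ?bk (err k) $ i = ?bk (e \<cdot>\<^sub>v xs - err k) $ i"
    using linear_map_diff[OF lin _ err_carrier i, of "e \<cdot>\<^sub>v xs"] xs by simp
  also have "\<dots> \<ge> 0" by (rule b_nonneg_index[OF err_carrier gap(1) err_nonneg gap(2) i])
  finally have "?bk (err k) $ i \<le> e * ?bk xs $ i"
    using linear_map_smult[OF lin xs i] by simp
  also have "\<dots> \<le> e * (jacobian *\<^sub>v err k) $ i"
  proof (rule mult_left_mono[OF _ e])
    have "0 \<le> (P *\<^sub>v err k) $ i" by (rule mult_mat_vec_nonneg[OF P err_carrier err_nonneg i])
    moreover have "0 \<le> b xs (err k) $ i"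
      using b_nonneg_index[OF xs err_carrier _ err_nonneg i] xs_pos
      unfolding nonneg_vec_def by (simp add: less_imp_le)
    ultimately show "?bk xs $ i \<le> (jacobian *\<^sub>v err k) $ i"
      unfolding jacobian_mult_vec[OF err_carrier i] by linarith
  qed
  finally show ?thesis .
qed

lemma jacobian_err_le_twice: "i < n \<Longrightarrow> (jacobian *\<^sub>v err k) $ i \<le> 2 * err (Suc k) $ i"
  using jacobian_err quadratic_le_next_err by fastforce

(* Since d_k -> 0 and xs > 0, eventually d_k <= e xs for any e > 0 ... *)
lemma err_eventually_small:
  assumes e: "0 < e"
  obtains K where "\<And>k l. K \<le> k \<Longrightarrow> l < n \<Longrightarrow> err k $ l \<le> e * xs $ l"
proof -
  have "\<forall>\<^sub>F k in sequentially. \<forall>l\<in>{..<n}. err k $ l < e * xs $ l"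
  proof (rule eventually_ball_finite)
    show "\<forall>l\<in>{..<n}. \<forall>\<^sub>F k in sequentially. err k $ l < e * xs $ l"
    proof
      fix l assume l: "l \<in> {..<n}"
      then have "0 < e * xs $ l" using e xs_pos by simp
      then show "\<forall>\<^sub>F k in sequentially. err k $ l < e * xs $ l"
        using err_tendsto_zero l order_tendstoD(2) by blast
    qed
  qed simp
  then show ?thesis using that unfolding eventually_sequentially by (meson lessThan_iff less_imp_le)
qed

(* ... and then, with e = 1 - 1/c, J d_k <= d_{k+1} + e J d_k gives J d_k <= c d_{k+1}. *)
lemma jacobian_err_late:
  assumes i: "i < n" and c: "1 < c" and small: "\<And>l. l < n \<Longrightarrow> err k $ l \<le> (1 - 1 / c) * xs $ l"
  shows "(jacobian *\<^sub>v err k) $ i \<le> c * err (Suc k) $ i"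
proof -
  have "(jacobian *\<^sub>v err k) $ i \<le> err (Suc k) $ i + (1 - 1 / c) * (jacobian *\<^sub>v err k) $ i"
    using jacobian_err[OF i] quadratic_le_jacobian_err[OF i _ small] c by simp
  then have "(jacobian *\<^sub>v err k) $ i / c \<le> err (Suc k) $ i"
    by (simp add: algebra_simps)
  then show ?thesis using c by (simp add: divide_le_eq mult.commute)
qed

theorem spectral_radius_jacobian_le_1: "real_spectral_radius jacobian \<le> 1"
proof (rule dense_ge)
  fix c :: real assume c: "1 < c"
  obtain K where K: "\<And>k l. K \<le> k \<Longrightarrow> l < n \<Longrightarrow> err k $ l \<le> (1 - 1 / c) * xs $ l"
    using err_eventually_small[of "1 - 1 / c"] c by auto
  show "real_spectral_radius jacobian \<le> c"
  proof (rule spectral_radius_le_of_comparison_sequence[OF jacobian_carrier jacobian_nonneg n])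
    show "\<And>k i. i < n \<Longrightarrow> (jacobian *\<^sub>v err k) $ i \<le> 2 * err (Suc k) $ i"
      by (rule jacobian_err_le_twice)
    show "\<And>k i. K \<le> k \<Longrightarrow> i < n \<Longrightarrow> (jacobian *\<^sub>v err k) $ i \<le> c * err (Suc k) $ i"
      using jacobian_err_late c K by blast
  qed (use c err_carrier err_nonneg err_decreasing err0_pos in \<open>auto simp: nonneg_vec_def\<close>)
qed

end

theorem mainTheorem6:
  fixes n :: nat and a x0 xs :: "real vec" and P :: "real mat"
    and b :: "real vec \<Rightarrow> real vec \<Rightarrow> real vec" and x :: "nat \<Rightarrow> real vec"
  assumes n: "n \<ge> 1"
    and a: "a \<in> carrier_vec n" "\<forall>i<n. a $ i \<ge> 0"
    and P: "P \<in> carrier_mat n n" "\<forall>i<n. \<forall>j<n. P $$ (i,j) \<ge> 0"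
    and b: "bilinear_on n b"
    and bnonneg: "\<forall>u\<in>carrier_vec n. \<forall>v\<in>carrier_vec n.
                   (\<forall>i<n. u $ i \<ge> 0) \<longrightarrow> (\<forall>i<n. v $ i \<ge> 0) \<longrightarrow> (\<forall>i<n. b u v $ i \<ge> 0)"
    and x0: "x 0 = x0" "x0 \<in> carrier_vec n" "\<forall>i<n. x0 $ i \<ge> 0"
    and rec: "\<forall>k. x (Suc k) = a + P *\<^sub>v x k + b (x k) (x k)"
    and mono: "\<forall>k. \<forall>i<n. x k $ i \<le> x (Suc k) $ i"
    and xs: "xs \<in> carrier_vec n" "\<forall>i<n. (\<lambda>k. x k $ i) \<longlonglongrightarrow> xs $ i"
    and strict: "\<forall>i<n. xs $ i > x0 $ i"
  shows "real_spectral_radius (P + bmat_left n b xs + bmat_right n b xs) \<le> 1"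
proof -
  interpret nonneg_quadratic_iteration n a P b x xs
    by unfold_locales
      (use n a(1) P b bnonneg x0 rec mono xs strict in \<open>auto simp: nonneg_mat_def nonneg_vec_def\<close>)
  show ?thesis using spectral_radius_jacobian_le_1 unfolding jacobian_def .
qed

end
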